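(* Let $A$ be a Lie conformal algebra and $M$ an $A$-module with a commutative associative product such that $\partial^M$ and all $a_\lambda$ are derivations of it. For $\xi\in\tilde\Gamma_h(A,M)$ and $\zeta\in\tilde\Gamma_j(A,M)$ the contraction operators on $\tilde\Gamma^\bullet(A,M)$ satisfy $\iota_\xi\iota_\zeta=(-1)^{hj}\iota_\zeta\iota_\xi$.
   Context: $\mathbb F$ field of characteristic 0. $\tilde\Gamma^k(A,M)$: $\mathbb F$-linear $\tilde\gamma:A^{\otimes k}\to\mathbb F[\lambda_1,\dots,\lambda_k]\otimes M$ with $\tilde\gamma(\dots,\partial a_i,\dots)=-\lambda_i\tilde\gamma(\dots)$ and skew-symmetric under simultaneous permutations of the $a_i$ and $\lambda_i$. $\tilde\Gamma_h(A,M)$: quotient of $A^{\otimes h}\otimes\mathrm{Hom}_{\mathbb F}(\mathbb F[\lambda_1,\dots,\lambda_h],M)$ by (C1) $\cdots\otimes\partial a_i\otimes\cdots\otimes\phi=-\cdots\otimes\lambda_i^*\phi$ where $(\lambda_i^*\phi)(f)=\phi(\lambda_if)$, and (C2) $a_{\sigma(1)}\otimes\cdots\otimes a_{\sigma(h)}\otimes\sigma^*\phi=\mathrm{sign}(\sigma)a_1\otimes\cdots\otimes a_h\otimes\phi$ where $(\sigma^*\phi)(f(\lambda_1,..,\lambda_h))=\phi(f(\lambda_{\sigma(1)},..,\lambda_{\sigma(h)}))$. Contraction: for $\xi$ represented by $a_1\otimes\cdots\otimes a_h\otimes\phi$ and $\tilde\gamma\in\tilde\Gamma^k$, $k\ge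 h$, $(\iota_\xi\tilde\gamma)_{\lambda_{h+1},\dots,\lambda_k}(a_{h+1},\dots,a_k)=\phi^\mu(\tilde\gamma_{\lambda_1,\dots,\lambda_k}(a_1,\dots,a_k))$, where $\phi^\mu:\mathbb F[\lambda_1,\dots,\lambda_h]\otimes M\to M$, $f\otimes m\mapsto\phi(f)\,m$, applied coefficientwise in $\lambda_{h+1},\dots,\lambda_k$; $\iota_\xi=0$ on $\tilde\Gamma^k$ for $k<h$; extended linearly in $\xi$ (this is well defined and lands in $\tilde\Gamma^{k-h}$). *)

theory Defs
  imports "HOL-Computational_Algebra.Polynomial" "HOL-Library.Poly_Mapping"
          "HOL-Combinatorics.Permutations"
begin

definition Fdmod :: "('f::field \<Rightarrow> 'v::ab_group_add \<Rightarrow> 'v) \<Rightarrow> ('v \<Rightarrow> 'v) \<Rightarrow> bool" where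
  "Fdmod s d \<longleftrightarrow> vector_space s \<and>
     (\<forall>x y. d (x + y) = d x + d y) \<and> (\<forall>c x. d (s c x) = s c (d x))"

text \<open>lambda-brackets [a_lambda b] and lambda-actions a_lambda m are polynomials in one
  variable lambda with coefficients in A (resp. M), i.e. elements of F[lambda] (x) A,
  represented as \<open>'a poly\<close>.\<close>
definition conf_rep ::
  "('f::field \<Rightarrow> 'a::ab_group_add \<Rightarrow> 'a) \<Rightarrow> ('a \<Rightarrow> 'a) \<Rightarrow> ('a \<Rightarrow> 'a \<Rightarrow> 'a poly) \<Rightarrow>
   ('f \<Rightarrow> 'v::ab_group_add \<Rightarrow> 'v) \<Rightarrow> ('v \<Rightarrow> 'v) \<Rightarrow> ('a \<Rightarrow> 'v \<Rightarrow> 'v poly) \<Rightarrow> bool" where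
  "conf_rep sA dA br sV dV act \<longleftrightarrow>
     \<comment> \<open>F-bilinearity\<close>
     (\<forall>a b x n. coeff (act (a + b) x) n = coeff (act a x) n + coeff (act b x) n) \<and>
     (\<forall>a x y n. coeff (act a (x + y)) n = coeff (act a x) n + coeff (act a y) n) \<and>
     (\<forall>c a x n. coeff (act (sA c a) x) n = sV c (coeff (act a x) n)) \<and>
     (\<forall>c a x n. coeff (act a (sV c x)) n = sV c (coeff (act a x) n)) \<and>
     \<comment> \<open>(d a)_lambda x = - lambda a_lambda x\<close>
     (\<forall>a x n. coeff (act (dA a) x) n =
                 (if n = 0 then 0 else - coeff (act a x) (n - 1))) \<and>
     \<comment> \<open>a_lambda (d x) = (d + lambda) a_lambda x\<close>
     (\<forall>a x n. coeff (act a (dV x)) n =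
                 dV (coeff (act a x) n) + (if n = 0 then 0 else coeff (act a x) (n - 1))) \<and>
     \<comment> \<open>a_lambda (b_mu x) - b_mu (a_lambda x) = [a_lambda b]_{lambda+mu} x,
         coefficient of lambda^m mu^n\<close>
     (\<forall>a b x m n. coeff (act a (coeff (act b x) n)) m - coeff (act b (coeff (act a x) m)) n =
        (\<Sum>p\<le>m. sV (of_nat ((m - p + n) choose n))
                     (coeff (act (coeff (br a b) p) x) (m - p + n))))"

text \<open>Lie conformal algebra: F[d]-module with a lambda-bracket that is sesquilinear,
  skew-symmetric ([b_lambda a] = - [a_{-lambda-d} b]) and satisfies the Jacobi identity.\<close>
definition lie_conformal_algebra ::
  "('f::field \<Rightarrow> 'a::ab_group_add \<Rightarrow> 'a) \<Rightarrow> ('a \<Rightarrow> 'a) \<Rightarrow> ('a \<Rightarrow> 'a \<Rightarrow> 'a poly) \<Rightarrow> bool" where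
  "lie_conformal_algebra sA dA br \<longleftrightarrow>
     Fdmod sA dA \<and> conf_rep sA dA br sA dA br \<and>
     (\<forall>a b m. coeff (br b a) m =
        - (\<Sum>n\<le>degree (br a b). sA (of_int ((-1) ^ n * int (n choose m)))
                                   ((dA ^^ (n - m)) (coeff (br a b) n))))"

definition conformal_module ::
  "('f::field \<Rightarrow> 'a::ab_group_add \<Rightarrow> 'a) \<Rightarrow> ('a \<Rightarrow> 'a) \<Rightarrow> ('a \<Rightarrow> 'a \<Rightarrow> 'a poly) \<Rightarrow>
   ('f \<Rightarrow> 'm::ab_group_add \<Rightarrow> 'm) \<Rightarrow> ('m \<Rightarrow> 'm) \<Rightarrow> ('a \<Rightarrow> 'm \<Rightarrow> 'm poly) \<Rightarrow> bool" where
  "conformal_module sA dA br sM dM act \<longleftrightarrow> Fdmod sM dM \<and> conf_rep sA dA br sM dM act"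

definition derivation_product ::
  "('f::field \<Rightarrow> 'm::comm_ring \<Rightarrow> 'm) \<Rightarrow> ('m \<Rightarrow> 'm) \<Rightarrow> ('a \<Rightarrow> 'm \<Rightarrow> 'm poly) \<Rightarrow> bool" where
  "derivation_product sM dM act \<longleftrightarrow>
     (\<forall>c x y. sM c (x * y) = sM c x * y) \<and>
     (\<forall>x y. dM (x * y) = dM x * y + x * dM y) \<and>
     (\<forall>a x y n. coeff (act a (x * y)) n = coeff (act a x) n * y + x * coeff (act a y) n)"

text \<open>Polynomials in the variables lambda_1, lambda_2, ... with coefficients in V are
  represented as finitely supported maps from exponent vectors to V;
  the variable lambda_(i+1) has index i.  F[lambda_1..lambda_k] (x) V consists of those
  whose exponent vectors only involve indices < k.\<close>
type_synonym 'v mpoly = "(nat \<Rightarrow>\<^sub>0 nat) \<Rightarrow>\<^sub>0 'v"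

definition in_vars :: "nat \<Rightarrow> 'v::zero mpoly \<Rightarrow> bool" where
  "in_vars k P \<longleftrightarrow> (\<forall>e\<in>Poly_Mapping.keys P. Poly_Mapping.keys e \<subseteq> {..<k})"

text \<open>Elements of Gamma-tilde^k: F-linear maps A^{(x)k} -> F[lambda_1..lambda_k] (x) M,
  represented as F-multilinear functions on lists of length k.\<close>
definition Gamma_up ::
  "('f::field \<Rightarrow> 'a::ab_group_add \<Rightarrow> 'a) \<Rightarrow> ('a \<Rightarrow> 'a) \<Rightarrow> ('f \<Rightarrow> 'm::ab_group_add \<Rightarrow> 'm) \<Rightarrow>
   nat \<Rightarrow> ('a list \<Rightarrow> 'm mpoly) \<Rightarrow> bool" where
  "Gamma_up sA dA sM k g \<longleftrightarrow>
     (\<forall>as. length as = k \<longrightarrow> in_vars k (g as)) \<and>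
     \<comment> \<open>multilinearity\<close>
     (\<forall>as i c1 c2 b1 b2 (e::nat \<Rightarrow>\<^sub>0 nat). length as = k \<longrightarrow> i < k \<longrightarrow>
        Poly_Mapping.lookup (g (as[i := sA c1 b1 + sA c2 b2])) e =
          sM c1 (Poly_Mapping.lookup (g (as[i := b1])) e) + sM c2 (Poly_Mapping.lookup (g (as[i := b2])) e)) \<and>
     \<comment> \<open>g(.., d a_i, ..) = - lambda_i g(..)\<close>
     (\<forall>as i (e::nat \<Rightarrow>\<^sub>0 nat). length as = k \<longrightarrow> i < k \<longrightarrow>
        Poly_Mapping.lookup (g (as[i := dA (as ! i)])) (e + Poly_Mapping.single i 1) = - Poly_Mapping.lookup (g as) e \<and>
        (Poly_Mapping.lookup e i = 0 \<longrightarrow> Poly_Mapping.lookup (g (as[i := dA (as ! i)])) e = 0)) \<and>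
     \<comment> \<open>skew-symmetry under simultaneous permutation of the a_i and lambda_i\<close>
     (\<forall>as \<sigma> (e::nat \<Rightarrow>\<^sub>0 nat) (e'::nat \<Rightarrow>\<^sub>0 nat). length as = k \<longrightarrow> \<sigma> permutes {..<k} \<longrightarrow>
        (\<forall>i. Poly_Mapping.lookup e' i = Poly_Mapping.lookup e (\<sigma> i)) \<longrightarrow>
        Poly_Mapping.lookup (g (map (\<lambda>i. as ! \<sigma> i) [0..<k])) e' =
          (if evenperm \<sigma> then Poly_Mapping.lookup (g as) e else - Poly_Mapping.lookup (g as) e))"

text \<open>A pure tensor a_1 (x) ... (x) a_h (x) phi with phi in Hom_F(F[lambda_1..lambda_h], M).
  An element of the quotient Gamma-tilde_h is represented by a finite sum (list) of such.\<close>
definition Hom_poly :: "('f::field \<Rightarrow> 'm::ab_group_add \<Rightarrow> 'm) \<Rightarrow> nat \<Rightarrow> ('f mpoly \<Rightarrow> 'm) \<Rightarrow> bool" where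
  "Hom_poly sM h \<phi> \<longleftrightarrow>
     (\<forall>p q. in_vars h p \<longrightarrow> in_vars h q \<longrightarrow> \<phi> (p + q) = \<phi> p + \<phi> q) \<and>
     (\<forall>c p. in_vars h p \<longrightarrow> \<phi> (Poly_Mapping.map (\<lambda>x. c * x) p) = sM c (\<phi> p))"

definition Gamma_low_rep ::
  "('f::field \<Rightarrow> 'm::ab_group_add \<Rightarrow> 'm) \<Rightarrow> nat \<Rightarrow> ('a list \<times> ('f mpoly \<Rightarrow> 'm)) list \<Rightarrow> bool" where
  "Gamma_low_rep sM h xi \<longleftrightarrow> (\<forall>(as, \<phi>)\<in>set xi. length as = h \<and> Hom_poly sM h \<phi>)"

text \<open>Exponent vector restricted to the first h variables, and the remaining part with
  variables renumbered lambda_{h+i} -> lambda_i.\<close>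
definition low_exp :: "nat \<Rightarrow> (nat \<Rightarrow>\<^sub>0 nat) \<Rightarrow> (nat \<Rightarrow>\<^sub>0 nat)" where
  "low_exp h e = (\<Sum>i<h. Poly_Mapping.single i (Poly_Mapping.lookup e i))"

definition high_exp :: "nat \<Rightarrow> (nat \<Rightarrow>\<^sub>0 nat) \<Rightarrow> (nat \<Rightarrow>\<^sub>0 nat)" where
  "high_exp h e = Poly_Mapping.map_key (\<lambda>i. i + h) e"

text \<open>phi^mu : F[lambda_1..lambda_h] (x) M -> M, f (x) m |-> phi(f) m, applied
  coefficientwise in the remaining variables (which are then renumbered).\<close>
definition phi_mu :: "nat \<Rightarrow> ('f::comm_ring_1 mpoly \<Rightarrow> 'm::comm_ring) \<Rightarrow> 'm mpoly \<Rightarrow> 'm mpoly" where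
  "phi_mu h \<phi> P = (\<Sum>e\<in>Poly_Mapping.keys P.
      Poly_Mapping.single (high_exp h e) (\<phi> (Poly_Mapping.single (low_exp h e) 1) * Poly_Mapping.lookup P e))"

text \<open>Contraction iota_xi : Gamma-tilde^k -> Gamma-tilde^{k-h} (zero if k < h);
  the result is normalised to vanish off lists of length k - h.\<close>
definition contr ::
  "nat \<Rightarrow> ('a list \<times> ('f::comm_ring_1 mpoly \<Rightarrow> 'm::comm_ring)) list \<Rightarrow> nat \<Rightarrow>
   ('a list \<Rightarrow> 'm mpoly) \<Rightarrow> ('a list \<Rightarrow> 'm mpoly)" where
  "contr h xi k g = (\<lambda>cs. if h \<le> k \<and> length cs = k - h
       then (\<Sum>(as, \<phi>)\<leftarrow>xi. phi_mu h \<phi> (g (as @ cs)))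
       else 0)"

end

theory Submission
  imports Defs
begin

text \<open>Contracting first with \<open>\<zeta>\<close> and then with \<open>\<xi>\<close> evaluates \<open>g\<close> at \<open>bs @ as @ cs\<close>,
  the other order at \<open>as @ bs @ cs\<close>. These argument lists differ by the permutation swapping
  a block of length \<open>h\<close> with a block of length \<open>j\<close>, which has sign \<open>(-1)^(h j)\<close>; by the
  skew-symmetry of \<open>g\<close> (a simultaneous permutation of arguments and variables \<open>\<lambda>\<^sub>i\<close>)
  the two results therefore differ by that sign.\<close>

text \<open>\<open>phi_mu\<close> is an instance, and unlike \<open>phi_mu\<close> this shape is closed under composition.\<close>

definition weighted_rekey ::
  "((nat \<Rightarrow>\<^sub>0 nat) \<Rightarrow> (nat \<Rightarrow>\<^sub>0 nat)) \<Rightarrow> ((nat \<Rightarrow>\<^sub>0 nat) \<Rightarrow> 'm::comm_ring) \<Rightarrow> 'm mpoly \<Rightarrow> 'm mpoly"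
  where "weighted_rekey r w P =
    (\<Sum>e\<in>Poly_Mapping.keys P. Poly_Mapping.single (r e) (w e * Poly_Mapping.lookup P e))"

lemma phi_mu_eq_weighted_rekey:
  "phi_mu h \<phi> P = weighted_rekey (high_exp h) (\<lambda>e. \<phi> (Poly_Mapping.single (low_exp h e) 1)) P"
  unfolding phi_mu_def weighted_rekey_def by (simp add: mult.commute)

lemma weighted_rekey_superset:
  assumes "finite S" "Poly_Mapping.keys P \<subseteq> S"
  shows "weighted_rekey r w P =
    (\<Sum>e\<in>S. Poly_Mapping.single (r e) (w e * Poly_Mapping.lookup P e))"
  unfolding weighted_rekey_def
  by (rule sum.mono_neutral_left[OF assms]) (auto simp: in_keys_iff)

lemma weighted_rekey_zero [simp]: "weighted_rekey r w 0 = 0"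
  by (simp add: weighted_rekey_def)

lemma weighted_rekey_add:
  "weighted_rekey r w (P + Q) = weighted_rekey r w P + weighted_rekey r w Q"
proof -
  let ?S = "Poly_Mapping.keys P \<union> Poly_Mapping.keys Q"
  have "weighted_rekey r w (P + Q) =
      (\<Sum>e\<in>?S. Poly_Mapping.single (r e) (w e * Poly_Mapping.lookup (P + Q) e))"
    by (rule weighted_rekey_superset) (simp_all add: keys_add)
  also have "\<dots> = (\<Sum>e\<in>?S. Poly_Mapping.single (r e) (w e * Poly_Mapping.lookup P e))
      + (\<Sum>e\<in>?S. Poly_Mapping.single (r e) (w e * Poly_Mapping.lookup Q e))"
    by (simp add: lookup_add distrib_left single_add sum.distrib)
  also have "\<dots> = weighted_rekey r w P + weighted_rekey r w Q"
    by (subst (1 2) weighted_rekey_superset[symmetric]) auto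
  finally show ?thesis .
qed

lemma weighted_rekey_uminus: "weighted_rekey r w (- P) = - weighted_rekey r w P"
  by (metis weighted_rekey_add weighted_rekey_zero add.right_inverse minus_unique)

lemma weighted_rekey_sum:
  "finite A \<Longrightarrow> weighted_rekey r w (\<Sum>i\<in>A. f i) = (\<Sum>i\<in>A. weighted_rekey r w (f i))"
  by (induction A rule: finite_induct) (auto simp: weighted_rekey_add)

lemma weighted_rekey_sum_list:
  "weighted_rekey r w (sum_list (map f xs)) = sum_list (map (\<lambda>x. weighted_rekey r w (f x)) xs)"
  by (induction xs) (auto simp: weighted_rekey_add)

lemma weighted_rekey_single:
  "weighted_rekey r w (Poly_Mapping.single a c) = Poly_Mapping.single (r a) (w a * c)"
  by (subst weighted_rekey_superset[of "{a}"]) auto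

lemma weighted_rekey_weighted_rekey:
  "weighted_rekey r2 w2 (weighted_rekey r1 w1 P) =
    weighted_rekey (r2 \<circ> r1) (\<lambda>e. w2 (r1 e) * w1 e) P"
  unfolding weighted_rekey_def[of r1 w1 P] weighted_rekey_def[of "r2 \<circ> r1"]
  by (simp add: weighted_rekey_sum weighted_rekey_single mult.assoc)

lemma weighted_rekey_reindex:
  assumes "bij \<pi>" and "\<And>e. Poly_Mapping.lookup P (\<pi> e) = Poly_Mapping.lookup Q e"
  shows "weighted_rekey r w P = weighted_rekey (r \<circ> \<pi>) (w \<circ> \<pi>) Q"
proof -
  have "Poly_Mapping.keys P \<subseteq> \<pi> ` Poly_Mapping.keys Q"
  proof
    fix x assume "x \<in> Poly_Mapping.keys P"
    moreover have "x = \<pi> (inv \<pi> x)"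
      using assms(1) by (simp add: bij_is_surj surj_f_inv_f)
    ultimately show "x \<in> \<pi> ` Poly_Mapping.keys Q"
      by (metis assms(2) image_eqI in_keys_iff)
  qed
  then have "weighted_rekey r w P =
      (\<Sum>e\<in>\<pi> ` Poly_Mapping.keys Q. Poly_Mapping.single (r e) (w e * Poly_Mapping.lookup P e))"
    by (intro weighted_rekey_superset) auto
  also have "\<dots> = weighted_rekey (r \<circ> \<pi>) (w \<circ> \<pi>) Q"
    using assms unfolding weighted_rekey_def
    by (subst sum.reindex) (auto intro: inj_on_subset simp: bij_def)
  finally show ?thesis .
qed

lemma phi_mu_phi_mu:
  "phi_mu h \<phi> (phi_mu j \<psi> P) = weighted_rekey (high_exp h \<circ> high_exp j)
    (\<lambda>e. \<phi> (Poly_Mapping.single (low_exp h (high_exp j e)) 1) * \<psi> (Poly_Mapping.single (low_exp j e) 1)) P"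
  by (simp add: phi_mu_eq_weighted_rekey weighted_rekey_weighted_rekey)

lemma phi_mu_zero [simp]: "phi_mu h \<phi> 0 = 0"
  by (simp add: phi_mu_eq_weighted_rekey)

lemma phi_mu_sum_list:
  "phi_mu h \<phi> (sum_list (map f xs)) = sum_list (map (\<lambda>x. phi_mu h \<phi> (f x)) xs)"
  by (simp add: phi_mu_eq_weighted_rekey weighted_rekey_sum_list)

definition shift_cycle :: "nat \<Rightarrow> nat \<Rightarrow> nat \<Rightarrow> nat" where
  "shift_cycle a h i = (if i = a then a + h else if a < i \<and> i \<le> a + h then i - 1 else i)"

definition swap_blocks :: "nat \<Rightarrow> nat \<Rightarrow> nat \<Rightarrow> nat" where
  "swap_blocks h j i = (if i < j then i + h else if i < h + j then i - j else i)"

lemma shift_cycle_Suc: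
  "shift_cycle a (Suc h) = Transposition.transpose (a + h) (a + h + 1) \<circ> shift_cycle a h"
  by (auto simp: shift_cycle_def fun_eq_iff Transposition.transpose_def)

lemma evenperm_shift_cycle:
  "permutation (shift_cycle a h) \<and> (evenperm (shift_cycle a h) \<longleftrightarrow> even h)"
proof (induction h)
  case 0
  have "shift_cycle a 0 = id" by (auto simp: shift_cycle_def)
  then show ?case by (simp add: permutation_id)
next
  case (Suc h)
  let ?t = "Transposition.transpose (a + h) (a + h + 1)"
  have t: "permutation ?t" "\<not> evenperm ?t"
    by (simp_all add: permutation_swap_id evenperm_swap)
  have "permutation (?t \<circ> shift_cycle a h)"
    using Suc.IH t permutation_compose by blast
  moreover have "evenperm (?t \<circ> shift_cycle a h) \<longleftrightarrow> even (Suc h)"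
    using Suc.IH t evenperm_comp[of ?t "shift_cycle a h"] by auto
  ultimately show ?case
    unfolding shift_cycle_Suc ..
qed

lemma swap_blocks_Suc: "swap_blocks h (Suc j) = swap_blocks h j \<circ> shift_cycle j h"
  by (auto simp: swap_blocks_def shift_cycle_def fun_eq_iff)

lemma evenperm_swap_blocks:
  "permutation (swap_blocks h j) \<and> (evenperm (swap_blocks h j) \<longleftrightarrow> even (h * j))"
proof (induction j)
  case 0
  have "swap_blocks h 0 = id" by (auto simp: swap_blocks_def)
  then show ?case by (simp add: permutation_id)
next
  case (Suc j)
  have "permutation (swap_blocks h j \<circ> shift_cycle j h)"
    using Suc.IH evenperm_shift_cycle[of j h] permutation_compose by blast
  moreover have "evenperm (swap_blocks h j \<circ> shift_cycle j h) \<longleftrightarrow> even (h * Suc j)"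
    using Suc.IH evenperm_shift_cycle[of j h] evenperm_comp[of "swap_blocks h j" "shift_cycle j h"]
    by auto
  ultimately show ?case
    unfolding swap_blocks_Suc ..
qed

lemma swap_blocks_inverse: "swap_blocks j h \<circ> swap_blocks h j = id"
  by (auto simp: swap_blocks_def fun_eq_iff)

lemma bij_swap_blocks: "bij (swap_blocks h j)"
  using o_bij swap_blocks_inverse by blast

lemma swap_blocks_permutes: "h + j \<le> k \<Longrightarrow> swap_blocks h j permutes {..<k}"
  using bij_swap_blocks by (auto simp: permutes_def bij_iff swap_blocks_def)

lemma nth_swap_blocks:
  assumes "length as = h" "length bs = j" "i < length (as @ bs @ cs)"
  shows "(as @ bs @ cs) ! swap_blocks h j i = (bs @ as @ cs) ! i"
  using assms by (auto simp: swap_blocks_def nth_append add.commute)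

lemma lookup_map_key:
  assumes "inj f"
  shows "Poly_Mapping.lookup (Poly_Mapping.map_key f p) k = Poly_Mapping.lookup p (f k)"
proof -
  note assms [transfer_rule]
  show ?thesis by transfer simp
qed

lemma lookup_high_exp: "Poly_Mapping.lookup (high_exp h e) i = Poly_Mapping.lookup e (i + h)"
  unfolding high_exp_def by (subst lookup_map_key) (auto simp: inj_on_def)

lemma low_exp_cong:
  "(\<And>i. i < h \<Longrightarrow> Poly_Mapping.lookup x i = Poly_Mapping.lookup y i) \<Longrightarrow> low_exp h x = low_exp h y"
  unfolding low_exp_def by (rule sum.cong) auto

abbreviation swap_exp_blocks :: "nat \<Rightarrow> nat \<Rightarrow> (nat \<Rightarrow>\<^sub>0 nat) \<Rightarrow> (nat \<Rightarrow>\<^sub>0 nat)" where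
  "swap_exp_blocks h j \<equiv> Poly_Mapping.map_key (swap_blocks h j)"

lemma lookup_swap_exp_blocks:
  "Poly_Mapping.lookup (swap_exp_blocks h j e) i = Poly_Mapping.lookup e (swap_blocks h j i)"
  by (rule lookup_map_key[OF bij_is_inj[OF bij_swap_blocks]])

lemma swap_exp_blocks_inverse: "swap_exp_blocks h j \<circ> swap_exp_blocks j h = id"
  by (rule ext, rule poly_mapping_eqI)
     (simp add: lookup_swap_exp_blocks pointfree_idE[OF swap_blocks_inverse])

lemma bij_swap_exp_blocks: "bij (swap_exp_blocks h j)"
  using o_bij swap_exp_blocks_inverse by blast

lemma high_exp_swap_exp_blocks:
  "high_exp h (high_exp j (swap_exp_blocks h j e)) = high_exp j (high_exp h e)"
  by (rule poly_mapping_eqI) (simp add: lookup_high_exp lookup_swap_exp_blocks swap_blocks_def algebra_simps)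

lemma low_exp_swap_exp_blocks:
  "low_exp h (high_exp j (swap_exp_blocks h j e)) = low_exp h e"
  "low_exp j (swap_exp_blocks h j e) = low_exp j (high_exp h e)"
  by (rule low_exp_cong; simp add: lookup_high_exp lookup_swap_exp_blocks swap_blocks_def)+

lemma Gamma_up_permute:
  assumes "Gamma_up sA dA sM k g" "length as = k" "\<sigma> permutes {..<k}"
  shows "Poly_Mapping.lookup (g (map (\<lambda>i. as ! \<sigma> i) [0..<k])) (Poly_Mapping.map_key \<sigma> e) =
    (if evenperm \<sigma> then Poly_Mapping.lookup (g as) e else - Poly_Mapping.lookup (g as) e)"
proof -
  have "inj \<sigma>" using assms(3) by (rule permutes_inj)
  with assms show ?thesis
    unfolding Gamma_up_def by (simp add: lookup_map_key)
qed

lemma Gamma_up_swap_blocks: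
  assumes "Gamma_up sA dA sM k g" "length as = h" "length bs = j" "length cs = k - h - j" "h + j \<le> k"
  shows "Poly_Mapping.lookup (g (bs @ as @ cs)) (swap_exp_blocks h j e) =
    Poly_Mapping.lookup (if even (h * j) then g (as @ bs @ cs) else - g (as @ bs @ cs)) e"
proof -
  let ?L = "as @ bs @ cs"
  have "map (\<lambda>i. ?L ! swap_blocks h j i) [0..<k] = bs @ as @ cs"
    using assms(2-5) by (intro nth_equalityI) (simp_all add: nth_swap_blocks)
  moreover have "length ?L = k" using assms(2-5) by simp
  ultimately show ?thesis
    using Gamma_up_permute[OF assms(1) _ swap_blocks_permutes[OF assms(5)], of ?L e]
      evenperm_swap_blocks[of h j]
    by simp
qed

lemma phi_mu_phi_mu_swap:
  assumes "Gamma_up sA dA sM k g" "length as = h" "length bs = j" "length cs = k - h - j" "h + j \<le> k"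
  shows "phi_mu h \<phi> (phi_mu j \<psi> (g (bs @ as @ cs))) =
    (if even (h * j) then phi_mu j \<psi> (phi_mu h \<phi> (g (as @ bs @ cs)))
     else - phi_mu j \<psi> (phi_mu h \<phi> (g (as @ bs @ cs))))"
proof -
  let ?r = "high_exp j \<circ> high_exp h"
  let ?w = "\<lambda>e. \<psi> (Poly_Mapping.single (low_exp j (high_exp h e)) 1) * \<phi> (Poly_Mapping.single (low_exp h e) 1)"
  let ?G = "if even (h * j) then g (as @ bs @ cs) else - g (as @ bs @ cs)"
  have "phi_mu h \<phi> (phi_mu j \<psi> (g (bs @ as @ cs))) =
      weighted_rekey ((high_exp h \<circ> high_exp j) \<circ> swap_exp_blocks h j)
        ((\<lambda>e. \<phi> (Poly_Mapping.single (low_exp h (high_exp j e)) 1) * \<psi> (Poly_Mapping.single (low_exp j e) 1))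
          \<circ> swap_exp_blocks h j) ?G"
    unfolding phi_mu_phi_mu
    by (rule weighted_rekey_reindex[OF bij_swap_exp_blocks Gamma_up_swap_blocks[OF assms]])
  also have "\<dots> = weighted_rekey ?r ?w ?G"
    by (simp add: comp_def high_exp_swap_exp_blocks low_exp_swap_exp_blocks mult.commute)
  finally show ?thesis
    by (simp add: phi_mu_phi_mu weighted_rekey_uminus)
qed

lemma contr_contr_apply:
  assumes "Gamma_low_rep sM h xi" "h + j \<le> k" "length cs = k - h - j"
  shows "contr h xi (k - j) (contr j zeta k g) cs =
    (\<Sum>x\<leftarrow>xi. \<Sum>y\<leftarrow>zeta. phi_mu h (snd x) (phi_mu j (snd y) (g (fst y @ fst x @ cs))))"
proof -
  have "contr j zeta k g (fst x @ cs) = (\<Sum>y\<leftarrow>zeta. phi_mu j (snd y) (g (fst y @ fst x @ cs)))"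
    if "x \<in> set xi" for x
  proof -
    have "length (fst x) = h" using assms(1) that by (auto simp: Gamma_low_rep_def)
    with assms(2,3) show ?thesis by (simp add: contr_def case_prod_unfold)
  qed
  then have "(\<Sum>x\<leftarrow>xi. phi_mu h (snd x) (contr j zeta k g (fst x @ cs))) =
      (\<Sum>x\<leftarrow>xi. \<Sum>y\<leftarrow>zeta. phi_mu h (snd x) (phi_mu j (snd y) (g (fst y @ fst x @ cs))))"
    by (simp add: phi_mu_sum_list cong: map_cong)
  moreover have "h \<le> k - j" "length cs = k - j - h" using assms(2,3) by auto
  ultimately show ?thesis by (simp add: contr_def[of h xi] case_prod_unfold)
qed

lemma contr_contr_apply_eq_0:
  "\<not> (h + j \<le> k \<and> length cs = k - h - j) \<Longrightarrow> contr h xi (k - j) (contr j zeta k g) cs = 0"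
  unfolding contr_def by (cases "j \<le> k"; cases "h \<le> k"; auto simp: case_prod_unfold)

lemma sum_list_map_commute:
  fixes f :: "'a \<Rightarrow> 'b \<Rightarrow> 'c::comm_monoid_add"
  shows "(\<Sum>x\<leftarrow>xs. \<Sum>y\<leftarrow>ys. f x y) = (\<Sum>y\<leftarrow>ys. \<Sum>x\<leftarrow>xs. f x y)"
  by (induction xs) (auto simp: sum_list_addf)

lemma contr_contr_apply_commute:
  fixes g :: "'a::ab_group_add list \<Rightarrow> 'm::comm_ring mpoly"
  assumes "Gamma_low_rep sM h xi" "Gamma_low_rep sM j zeta" "Gamma_up sA dA sM k g"
    and "h + j \<le> k" "length cs = k - h - j"
  shows "contr h xi (k - j) (contr j zeta k g) cs =
    (if even (h * j) then contr j zeta (k - h) (contr h xi k g) cs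
     else - contr j zeta (k - h) (contr h xi k g) cs)"
proof -
  let ?F = "\<lambda>P :: 'm mpoly. if even (h * j) then P else - P"
  have lengths: "length (fst x) = h" "length (fst y) = j" if "x \<in> set xi" "y \<in> set zeta" for x y
    using assms(1,2) that by (auto simp: Gamma_low_rep_def)
  have "contr h xi (k - j) (contr j zeta k g) cs =
      (\<Sum>x\<leftarrow>xi. \<Sum>y\<leftarrow>zeta. phi_mu h (snd x) (phi_mu j (snd y) (g (fst y @ fst x @ cs))))"
    using assms(1,4,5) by (rule contr_contr_apply)
  also have "\<dots> = (\<Sum>x\<leftarrow>xi. \<Sum>y\<leftarrow>zeta. ?F (phi_mu j (snd y) (phi_mu h (snd x) (g (fst x @ fst y @ cs)))))"
    using assms(4,5) lengths
    by (intro arg_cong[where f = sum_list] map_cong refl phi_mu_phi_mu_swap[OF assms(3)]) auto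
  also have "\<dots> = (\<Sum>y\<leftarrow>zeta. \<Sum>x\<leftarrow>xi. ?F (phi_mu j (snd y) (phi_mu h (snd x) (g (fst x @ fst y @ cs)))))"
    by (rule sum_list_map_commute)
  also have "\<dots> = ?F (\<Sum>y\<leftarrow>zeta. \<Sum>x\<leftarrow>xi. phi_mu j (snd y) (phi_mu h (snd x) (g (fst x @ fst y @ cs))))"
    by (simp add: uminus_sum_list_map[symmetric, unfolded comp_def])
  also have "\<dots> = ?F (contr j zeta (k - h) (contr h xi k g) cs)"
    using contr_contr_apply[OF assms(2), of h k cs xi g] assms(4,5) by (simp add: add.commute)
  finally show ?thesis .
qed

lemma contr_contr_commute:
  assumes "Gamma_low_rep sM h xi" "Gamma_low_rep sM j zeta" "Gamma_up sA dA sM k g"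
  shows "contr h xi (k - j) (contr j zeta k g) =
    (if even (h * j) then contr j zeta (k - h) (contr h xi k g)
     else - contr j zeta (k - h) (contr h xi k g))"
proof (rule ext)
  fix cs
  show "contr h xi (k - j) (contr j zeta k g) cs =
      (if even (h * j) then contr j zeta (k - h) (contr h xi k g)
       else - contr j zeta (k - h) (contr h xi k g)) cs"
  proof (cases "h + j \<le> k \<and> length cs = k - h - j")
    case True
    then show ?thesis using contr_contr_apply_commute[OF assms] by simp
  next
    case False
    then show ?thesis by (auto simp: contr_contr_apply_eq_0 add.commute)
  qed
qed

theorem proposition3p4:
  fixes sA :: "'f::field_char_0 \<Rightarrow> 'a::ab_group_add \<Rightarrow> 'a"
    and dA :: "'a \<Rightarrow> 'a"
    and br :: "'a \<Rightarrow> 'a \<Rightarrow> 'a poly"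
    and sM :: "'f \<Rightarrow> 'm::comm_ring \<Rightarrow> 'm"
    and dM :: "'m \<Rightarrow> 'm"
    and act :: "'a \<Rightarrow> 'm \<Rightarrow> 'm poly"
    and h j k :: nat
    and xi zeta :: "('a list \<times> ('f mpoly \<Rightarrow> 'm)) list"
    and g :: "'a list \<Rightarrow> 'm mpoly"
  assumes "lie_conformal_algebra sA dA br"
    and "conformal_module sA dA br sM dM act"
    and "derivation_product sM dM act"
    and "Gamma_low_rep sM h xi"
    and "Gamma_low_rep sM j zeta"
    and "Gamma_up sA dA sM k g"
  shows "contr h xi (k - j) (contr j zeta k g) =
         (if even (h * j) then contr j zeta (k - h) (contr h xi k g)
          else - contr j zeta (k - h) (contr h xi k g))"
  using assms(4-6) by (rule contr_contr_commute)

end
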